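(* Let $G$ be a finite group acting on a closed connected manifold $M$, let $\ell$ be a prime, and suppose the action of $G$ on $M$ is $\mathbb{F}_\ell$-homologically wide. Then for every subgroup $H_1\le G$, the $\mathbb{F}_\ell[G]$-module $(\mathrm{Ind}^G_{H_1}\mathbf{1})\otimes_{\mathbb{Z}}\mathbb{F}_\ell$ is an $\mathbb{F}_\ell[G]$-submodule of $\mathrm{H}_1(M,\mathbb{F}_\ell)$; and if $\ell$ does not divide $|G|$, it is also a quotient $\mathbb{F}_\ell[G]$-module of $\mathrm{H}_1(M,\mathbb{F}_\ell)$.
   Context: The action of $G$ on $M$ is $\mathbb{F}_\ell$-homologically wide if the representation of $G$ on $\mathrm{H}_1(M,\mathbb{F}_\ell)$ induced by the action contains the regular representation $\mathbb{F}_\ell[G]$, i.e. there is $\omega\in\mathrm{H}_1(M,\mathbb{F}_\ell)$ with the $|G|$ classes $g\omega$ ($g\in G$) linearly independent. $\mathrm{Ind}^G_{H_1}\mathbf{1}$ is the permutation module $\mathbb{Z}[G/H_1]$. *)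

theory Defs
  imports "HOL-Homology.Homology" "HOL-Algebra.Group_Action" "HOL-Analysis.Abstract_Topological_Spaces" "HOL-Computational_Algebra.Primes"
begin

definition locally_euclidean :: "nat \<Rightarrow> 'a topology \<Rightarrow> bool" where
  "locally_euclidean n M \<longleftrightarrow>
     (\<forall>x\<in>topspace M. \<exists>U V. openin M U \<and> x \<in> U \<and> openin (Euclidean_space n) V \<and>
        subtopology M U homeomorphic_space subtopology (Euclidean_space n) V)"

definition closed_connected_manifold :: "'a topology \<Rightarrow> bool" where
  "closed_connected_manifold M \<longleftrightarrow>
     (\<exists>n. locally_euclidean n M) \<and> Hausdorff_space M \<and> second_countable M \<and>
     compact_space M \<and> connected_space M \<and> topspace M \<noteq> {}"

definition homeo_action :: "('g, 'b) monoid_scheme \<Rightarrow> 'a topology \<Rightarrow> ('g \<Rightarrow> 'a \<Rightarrow> 'a) \<Rightarrow> bool" where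
  "homeo_action G M \<phi> \<longleftrightarrow>
     group_action G (topspace M) \<phi> \<and> (\<forall>g\<in>carrier G. homeomorphic_map M M (\<phi> g))"

text \<open>With C_k the integral singular chains, H_1(M;F_l) = Z/B where
  Z = {c in C_1. boundary c in l C_0} and B = l C_1 + boundary(C_2).\<close>

definition mod_cycle :: "nat \<Rightarrow> 'a topology \<Rightarrow> 'a chain \<Rightarrow> bool" where
  "mod_cycle l M c \<longleftrightarrow> singular_chain 1 M c \<and>
     (\<forall>s. int l dvd poly_mapping.lookup (chain_boundary 1 c) s)"

definition mod_boundary :: "nat \<Rightarrow> 'a topology \<Rightarrow> 'a chain \<Rightarrow> bool" where
  "mod_boundary l M c \<longleftrightarrow> (\<exists>a b. singular_chain 1 M a \<and> singular_chain 2 M b \<and>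
     c = frag_cmul (int l) a + chain_boundary 2 b)"

text \<open>Equality of classes in H_1(M;F_l).\<close>
definition mod_homologous :: "nat \<Rightarrow> 'a topology \<Rightarrow> 'a chain \<Rightarrow> 'a chain \<Rightarrow> bool" where
  "mod_homologous l M c d \<longleftrightarrow> mod_boundary l M (c - d)"

definition act_chain :: "('g \<Rightarrow> 'a \<Rightarrow> 'a) \<Rightarrow> 'g \<Rightarrow> 'a chain \<Rightarrow> 'a chain" where
  "act_chain \<phi> g c = chain_map 1 (\<phi> g) c"

text \<open>Homologically wide: some class omega whose translates g omega (g in G) are
  F_l-linearly independent in H_1(M;F_l).\<close>
definition homologically_wide ::
    "nat \<Rightarrow> ('g, 'b) monoid_scheme \<Rightarrow> 'a topology \<Rightarrow> ('g \<Rightarrow> 'a \<Rightarrow> 'a) \<Rightarrow> bool" where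
  "homologically_wide l G M \<phi> \<longleftrightarrow>
     (\<exists>\<omega>. mod_cycle l M \<omega> \<and>
        (\<forall>a :: 'g \<Rightarrow> int.
           mod_boundary l M (\<Sum>g\<in>carrier G. frag_cmul (a g) (act_chain \<phi> g \<omega>))
           \<longrightarrow> (\<forall>g\<in>carrier G. int l dvd a g)))"

text \<open>Left cosets gH, the standard basis of Ind_H^G 1 = Z[G/H]; G acts by left translation.\<close>
definition left_cosets :: "('g, 'b) monoid_scheme \<Rightarrow> 'g set \<Rightarrow> 'g set set" where
  "left_cosets G H = (\<lambda>g. g <#\<^bsub>G\<^esub> H) ` carrier G"

text \<open>An F_l[G]-linear map F_l[G/H] -> H_1(M;F_l) is given by the (mod l cycle
  representatives of the) images f C of the basis vectors C; it is G-equivariant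
  iff g_* (f C) and f (gC) are homologous mod l; it is injective iff
  sum_C a_C f(C) in B forces all a_C = 0 in F_l.\<close>
definition perm_submodule ::
    "nat \<Rightarrow> ('g, 'b) monoid_scheme \<Rightarrow> 'g set \<Rightarrow> 'a topology \<Rightarrow> ('g \<Rightarrow> 'a \<Rightarrow> 'a) \<Rightarrow> bool" where
  "perm_submodule l G H M \<phi> \<longleftrightarrow>
     (\<exists>f :: 'g set \<Rightarrow> 'a chain.
        (\<forall>C\<in>left_cosets G H. mod_cycle l M (f C)) \<and>
        (\<forall>g\<in>carrier G. \<forall>C\<in>left_cosets G H.
            mod_homologous l M (act_chain \<phi> g (f C)) (f (g <#\<^bsub>G\<^esub> C))) \<and>
        (\<forall>a :: 'g set \<Rightarrow> int.
            mod_boundary l M (\<Sum>C\<in>left_cosets G H. frag_cmul (a C) (f C))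
            \<longrightarrow> (\<forall>C\<in>left_cosets G H. int l dvd a C)))"

text \<open>An F_l[G]-linear surjection H_1(M;F_l) -> F_l[G/H], given on cycle
  representatives: q z is the coefficient vector (integers read mod l).
  It is additive, vanishes on B (so is well defined on classes), is
  G-equivariant ((g x)(gC) = x(C)), and is surjective.\<close>
definition perm_quotient ::
    "nat \<Rightarrow> ('g, 'b) monoid_scheme \<Rightarrow> 'g set \<Rightarrow> 'a topology \<Rightarrow> ('g \<Rightarrow> 'a \<Rightarrow> 'a) \<Rightarrow> bool" where
  "perm_quotient l G H M \<phi> \<longleftrightarrow>
     (\<exists>q :: 'a chain \<Rightarrow> 'g set \<Rightarrow> int.
        (\<forall>z w. mod_cycle l M z \<longrightarrow> mod_cycle l M w \<longrightarrow>
            (\<forall>C\<in>left_cosets G H. int l dvd (q (z + w) C - (q z C + q w C)))) \<and>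
        (\<forall>b. mod_boundary l M b \<longrightarrow> (\<forall>C\<in>left_cosets G H. int l dvd q b C)) \<and>
        (\<forall>g\<in>carrier G. \<forall>z. mod_cycle l M z \<longrightarrow>
            (\<forall>C\<in>left_cosets G H.
               int l dvd (q (act_chain \<phi> g z) (g <#\<^bsub>G\<^esub> C) - q z C))) \<and>
        (\<forall>x :: 'g set \<Rightarrow> int. \<exists>z. mod_cycle l M z \<and>
            (\<forall>C\<in>left_cosets G H. int l dvd (q z C - x C))))"

end

theory Submission
  imports Defs
begin

text \<open>
  Let \<omega> be a class whose translates g\<omega> are linearly independent. For the submodule, send the
  coset C to \<Sum>x\<in>C. x\<omega>: this is G-equivariant on the nose, and a relation among these images
  regroups into a relation among the g\<omega>, whose coefficients vanish by wideness.

  For the quotient, extend the dual basis vector of \<omega> in the span of the g\<omega> to a linear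
  functional \<lambda> on H_1(M;F_l) vanishing on the other translates (Zorn's lemma, applied to
  subgroups of integral 1-chains that contain the mod-l boundaries). Then
  z \<mapsto> \<Sum>_C (\<Sum>x\<in>C. \<lambda>(x^-1 z)) C is G-equivariant, and it is onto because, for
  representatives r_C of the cosets, \<Sum>_C a_C r_C\<omega> is mapped to \<Sum>_C a_C C. This never uses that
  l does not divide |G|: F_l[G] is self-injective, so a regular summand always splits off.
\<close>

definition frag_submodule :: "('x \<Rightarrow>\<^sub>0 int) set \<Rightarrow> bool" where
  "frag_submodule W \<longleftrightarrow>
     0 \<in> W \<and> (\<forall>x\<in>W. \<forall>y\<in>W. x + y \<in> W) \<and> (\<forall>x\<in>W. \<forall>k. frag_cmul k x \<in> W)"

lemma frag_cmul_diff: "frag_cmul c (x - y) = frag_cmul c x - frag_cmul c y"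
  by (rule poly_mapping_eqI) (simp add: lookup_minus algebra_simps)

lemma frag_submoduleI:
  assumes "0 \<in> W" and "\<And>x y. x \<in> W \<Longrightarrow> y \<in> W \<Longrightarrow> x + y \<in> W"
    and "\<And>x k. x \<in> W \<Longrightarrow> frag_cmul k x \<in> W"
  shows "frag_submodule W"
  using assms unfolding frag_submodule_def by blast

context
  fixes W :: "('x \<Rightarrow>\<^sub>0 int) set"
  assumes W: "frag_submodule W"
begin

lemma frag_submodule_zero: "0 \<in> W"
  using W unfolding frag_submodule_def by blast

lemma frag_submodule_add: "x \<in> W \<Longrightarrow> y \<in> W \<Longrightarrow> x + y \<in> W"
  using W unfolding frag_submodule_def by blast

lemma frag_submodule_cmul: "x \<in> W \<Longrightarrow> frag_cmul k x \<in> W"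
  using W unfolding frag_submodule_def by blast

lemma frag_submodule_diff: "x \<in> W \<Longrightarrow> y \<in> W \<Longrightarrow> x - y \<in> W"
  using frag_submodule_add[of x "frag_cmul (-1) y"] frag_submodule_cmul[of y "-1"] by simp

lemma frag_submodule_sum: "(\<And>i. i \<in> I \<Longrightarrow> f i \<in> W) \<Longrightarrow> sum f I \<in> W"
  by (induction I rule: infinite_finite_induct) (auto intro: frag_submodule_zero frag_submodule_add)

end

lemma frag_submodule_Union_chain:
  assumes "C \<noteq> {}" and "\<And>X. X \<in> C \<Longrightarrow> frag_submodule X"
    and "\<And>X Y. X \<in> C \<Longrightarrow> Y \<in> C \<Longrightarrow> X \<subseteq> Y \<or> Y \<subseteq> X"
  shows "frag_submodule (\<Union>C)"
proof (rule frag_submoduleI)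
  show "0 \<in> \<Union>C"
    using assms(1,2) frag_submodule_zero by blast
  show "x + y \<in> \<Union>C" if xy: "x \<in> \<Union>C" "y \<in> \<Union>C" for x y
  proof -
    obtain X Y where "X \<in> C" "Y \<in> C" "x \<in> X" "y \<in> Y"
      using xy by blast
    then show ?thesis
      using assms(2) assms(3)[of X Y] frag_submodule_add by blast
  qed
  show "frag_cmul k x \<in> \<Union>C" if "x \<in> \<Union>C" for x k
    using that assms(2) frag_submodule_cmul by blast
qed

lemma frag_submodule_plus_span:
  assumes W: "frag_submodule W"
  shows "frag_submodule {c. \<exists>a. c - (\<Sum>i\<in>S. frag_cmul (a i) (f i)) \<in> W}"
proof (rule frag_submoduleI)
  show "0 \<in> {c. \<exists>a. c - (\<Sum>i\<in>S. frag_cmul (a i) (f i)) \<in> W}"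
    using frag_submodule_zero[OF W] by (auto intro!: exI[of _ "\<lambda>_. 0"])
  show "x + y \<in> {c. \<exists>a. c - (\<Sum>i\<in>S. frag_cmul (a i) (f i)) \<in> W}"
    if xy: "x \<in> {c. \<exists>a. c - (\<Sum>i\<in>S. frag_cmul (a i) (f i)) \<in> W}"
      "y \<in> {c. \<exists>a. c - (\<Sum>i\<in>S. frag_cmul (a i) (f i)) \<in> W}" for x y
  proof -
    obtain a b where "x - (\<Sum>i\<in>S. frag_cmul (a i) (f i)) \<in> W" "y - (\<Sum>i\<in>S. frag_cmul (b i) (f i)) \<in> W"
      using xy by blast
    then have "(x - (\<Sum>i\<in>S. frag_cmul (a i) (f i))) + (y - (\<Sum>i\<in>S. frag_cmul (b i) (f i))) \<in> W"
      by (rule frag_submodule_add[OF W])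
    moreover have "(\<Sum>i\<in>S. frag_cmul (a i + b i) (f i)) =
                   (\<Sum>i\<in>S. frag_cmul (a i) (f i)) + (\<Sum>i\<in>S. frag_cmul (b i) (f i))"
      by (simp add: frag_cmul_distrib sum.distrib)
    ultimately have "x + y - (\<Sum>i\<in>S. frag_cmul (a i + b i) (f i)) \<in> W"
      by (simp add: algebra_simps)
    then show ?thesis
      unfolding mem_Collect_eq by (rule exI[of _ "\<lambda>i. a i + b i"])
  qed
  show "frag_cmul k x \<in> {c. \<exists>a. c - (\<Sum>i\<in>S. frag_cmul (a i) (f i)) \<in> W}"
    if x: "x \<in> {c. \<exists>a. c - (\<Sum>i\<in>S. frag_cmul (a i) (f i)) \<in> W}" for x k
  proof -
    obtain a where "x - (\<Sum>i\<in>S. frag_cmul (a i) (f i)) \<in> W"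
      using x by blast
    then have "frag_cmul k (x - (\<Sum>i\<in>S. frag_cmul (a i) (f i))) \<in> W"
      by (rule frag_submodule_cmul[OF W])
    then have "frag_cmul k x - (\<Sum>i\<in>S. frag_cmul (k * a i) (f i)) \<in> W"
      by (simp add: frag_cmul_diff frag_cmul_sum)
    then show ?thesis
      unfolding mem_Collect_eq by (rule exI[of _ "\<lambda>i. k * a i"])
  qed
qed

lemma prime_bezout:
  assumes "prime l" and "\<not> int l dvd k"
  shows "\<exists>u t. u * k + t * int l = 1"
proof -
  have "coprime (int l) k"
    using assms prime_imp_coprime[of "int l" k] by (simp add: prime_nat_int_transfer)
  then have "gcd k (int l) = 1"
    by (simp add: coprime_iff_gcd_eq_1 gcd.commute)
  then show ?thesis
    using bezout_int[of k "int l"] by metis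
qed

lemma frag_submodule_maximal_avoiding:
  assumes "frag_submodule B" and "v \<notin> B"
  obtains W where "B \<subseteq> W" "frag_submodule W" "v \<notin> W"
    "\<And>W'. frag_submodule W' \<Longrightarrow> W \<subseteq> W' \<Longrightarrow> v \<notin> W' \<Longrightarrow> W' = W"
proof -
  define \<A> where "\<A> = {W. B \<subseteq> W \<and> frag_submodule W \<and> v \<notin> W}"
  have "\<exists>W\<in>\<A>. \<forall>X\<in>\<A>. W \<subseteq> X \<longrightarrow> X = W"
  proof (rule subset_Zorn_nonempty)
    show "\<A> \<noteq> {}"
      using assms unfolding \<A>_def by blast
    show "\<Union>C \<in> \<A>" if "C \<noteq> {}" and "subset.chain \<A> C" for C
    proof -
      have "C \<subseteq> \<A>" and "\<forall>X\<in>C. \<forall>Y\<in>C. X \<subseteq> Y \<or> Y \<subseteq> X"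
        using that(2) unfolding subset.chain_def by auto
      then have "frag_submodule (\<Union>C)"
        by (intro frag_submodule_Union_chain[OF that(1)]) (auto simp: \<A>_def)
      then show ?thesis
        using \<open>C \<subseteq> \<A>\<close> that(1) unfolding \<A>_def by blast
    qed
  qed
  then obtain W where W: "W \<in> \<A>" and max: "\<forall>X\<in>\<A>. W \<subseteq> X \<longrightarrow> X = W"
    by blast
  show thesis
  proof (rule that)
    show "B \<subseteq> W" "frag_submodule W" "v \<notin> W"
      using W unfolding \<A>_def by auto
    show "W' = W" if "frag_submodule W'" "W \<subseteq> W'" "v \<notin> W'" for W'
      using max that \<open>B \<subseteq> W\<close> unfolding \<A>_def by blast
  qed
qed

text \<open>By maximality v \<in> W + \<int>z, say v = w + k z; then l does not divide k, and
  inverting k modulo l expresses z through v and W.\<close>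
lemma maximal_avoiding_span:
  assumes W: "frag_submodule W" and "v \<notin> W" and l: "prime l"
    and max: "\<And>W'. frag_submodule W' \<Longrightarrow> W \<subseteq> W' \<Longrightarrow> v \<notin> W' \<Longrightarrow> W' = W"
    and lz: "frag_cmul (int l) z \<in> W"
  shows "\<exists>k. z - frag_cmul k v \<in> W"
proof (cases "z \<in> W")
  case True
  then show ?thesis
    by (intro exI[of _ 0]) simp
next
  case False
  define W' where "W' = {c. \<exists>a. c - (\<Sum>i\<in>{z}. frag_cmul (a i) i) \<in> W}"
  have "frag_submodule W'"
    unfolding W'_def by (rule frag_submodule_plus_span[OF W])
  moreover have "W \<subseteq> W'"
    unfolding W'_def by (auto intro: exI[of _ "\<lambda>_. 0"])
  moreover have "z \<in> W'"
    unfolding W'_def using frag_submodule_zero[OF W] by (auto intro!: exI[of _ "\<lambda>_. 1"])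
  ultimately have "v \<in> W'"
    using max False by blast
  then obtain k where "v - frag_cmul k z \<in> W"
    unfolding W'_def by auto
  then obtain w where w: "w \<in> W" and v: "v = w + frag_cmul k z"
    by (metis diff_add_cancel)
  have "\<not> int l dvd k"
  proof
    assume "int l dvd k"
    then obtain m where "k = int l * m" ..
    then have "frag_cmul k z \<in> W"
      using frag_submodule_cmul[OF W lz, of m] by (simp add: mult.commute)
    then show False
      using \<open>v \<notin> W\<close> v frag_submodule_add[OF W w] by simp
  qed
  then obtain u t where ut: "u * k + t * int l = 1"
    using prime_bezout[OF l] by blast
  then have tl: "1 - u * k = t * int l"
    by linarith
  have "z - frag_cmul u v = frag_cmul (1 - u * k) z - frag_cmul u w"
    by (simp add: v frag_cmul_distrib2 frag_cmul_diff_distrib algebra_simps)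
  also have "\<dots> = frag_cmul t (frag_cmul (int l) z) - frag_cmul u w"
    by (simp add: tl)
  also have "\<dots> \<in> W"
    by (rule frag_submodule_diff[OF W frag_submodule_cmul[OF W lz] frag_submodule_cmul[OF W w]])
  finally show ?thesis ..
qed

lemma frag_cmul_of_dvd_lookup:
  assumes "\<And>s. d dvd poly_mapping.lookup c s"
  obtains e where "c = frag_cmul d e"
proof
  have "finite {s. poly_mapping.lookup c s div d \<noteq> 0}"
    by (rule finite_subset[of _ "Poly_Mapping.keys c"]) (auto simp: in_keys_iff)
  then show "c = frag_cmul d (Abs_poly_mapping (\<lambda>s. poly_mapping.lookup c s div d))"
    by (intro poly_mapping_eqI) (simp add: assms)
qed

lemma mod_cycle_imp_singular_chain: "mod_cycle l M c \<Longrightarrow> singular_chain 1 M c"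
  by (simp add: mod_cycle_def)

lemma mod_boundary_cmul_modulus: "singular_chain 1 M c \<Longrightarrow> mod_boundary l M (frag_cmul (int l) c)"
  unfolding mod_boundary_def by (rule exI[of _ c], rule exI[of _ 0]) simp

lemma frag_submodule_mod_boundary: "frag_submodule (Collect (mod_boundary l M))"
proof (rule frag_submoduleI)
  show "0 \<in> Collect (mod_boundary l M)"
    using mod_boundary_cmul_modulus[of M 0 l] by simp
  show "x + y \<in> Collect (mod_boundary l M)"
    if xy: "x \<in> Collect (mod_boundary l M)" "y \<in> Collect (mod_boundary l M)" for x y
  proof -
    obtain a b a' b' where ab: "singular_chain 1 M a" "singular_chain 2 M b"
      "singular_chain 1 M a'" "singular_chain 2 M b'"
      and "x = frag_cmul (int l) a + chain_boundary 2 b" "y = frag_cmul (int l) a' + chain_boundary 2 b'"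
      using xy unfolding mod_boundary_def by auto
    then have "x + y = frag_cmul (int l) (a + a') + chain_boundary 2 (b + b')"
      by (simp add: frag_cmul_distrib2 chain_boundary_add algebra_simps)
    then show ?thesis
      unfolding mod_boundary_def using ab singular_chain_add by blast
  qed
  show "frag_cmul k x \<in> Collect (mod_boundary l M)" if x: "x \<in> Collect (mod_boundary l M)" for x k
  proof -
    obtain a b where ab: "singular_chain 1 M a" "singular_chain 2 M b"
      and "x = frag_cmul (int l) a + chain_boundary 2 b"
      using x unfolding mod_boundary_def by auto
    then have "frag_cmul k x = frag_cmul (int l) (frag_cmul k a) + chain_boundary 2 (frag_cmul k b)"
      by (simp add: frag_cmul_distrib2 chain_boundary_cmul mult.commute)
    then show ?thesis
      unfolding mod_boundary_def using ab singular_chain_cmul by blast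
  qed
qed

lemma frag_submodule_mod_cycle: "frag_submodule (Collect (mod_cycle l M))"
  by (rule frag_submoduleI)
    (auto simp: mod_cycle_def singular_chain_add singular_chain_cmul chain_boundary_add
      chain_boundary_cmul lookup_add)

lemma mod_boundary_chain_map:
  assumes "mod_boundary l M c" and f: "continuous_map M N f"
  shows "mod_boundary l N (chain_map 1 f c)"
proof -
  obtain a b where ab: "singular_chain 1 M a" "singular_chain 2 M b"
    "c = frag_cmul (int l) a + chain_boundary 2 b"
    using assms(1) unfolding mod_boundary_def by blast
  have "chain_map 1 f (chain_boundary 2 b) = chain_boundary 2 (chain_map 2 f b)"
    using chain_boundary_chain_map[OF ab(2), of f] by (simp add: numeral_2_eq_2)
  then have "chain_map 1 f c = frag_cmul (int l) (chain_map 1 f a) + chain_boundary 2 (chain_map 2 f b)"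
    by (simp add: ab(3) chain_map_add)
  then show ?thesis
    unfolding mod_boundary_def using ab f singular_chain_chain_map by blast
qed

lemma mod_cycle_chain_map:
  assumes "mod_cycle l M c" and f: "continuous_map M N f"
  shows "mod_cycle l N (chain_map 1 f c)"
proof -
  have c: "singular_chain 1 M c"
    using assms(1) by (rule mod_cycle_imp_singular_chain)
  obtain e where e: "chain_boundary 1 c = frag_cmul (int l) e"
    using assms(1) frag_cmul_of_dvd_lookup unfolding mod_cycle_def by blast
  have "chain_boundary 1 (chain_map 1 f c) = chain_map 0 f (chain_boundary 1 c)"
    using chain_boundary_chain_map[OF c, of f] by simp
  also have "\<dots> = frag_cmul (int l) (chain_map 0 f e)"
    by (simp only: e chain_map_cmul)
  finally show ?thesis
    unfolding mod_cycle_def using c f by (simp add: singular_chain_chain_map)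
qed

lemma homeo_action_continuous_map:
  "homeo_action G M \<phi> \<Longrightarrow> g \<in> carrier G \<Longrightarrow> continuous_map M M (\<phi> g)"
  unfolding homeo_action_def using homeomorphic_imp_continuous_map by metis

lemma act_chain_mult:
  assumes "homeo_action G M \<phi>" and "g \<in> carrier G" "h \<in> carrier G" and "singular_chain 1 M c"
  shows "act_chain \<phi> g (act_chain \<phi> h c) = act_chain \<phi> (g \<otimes>\<^bsub>G\<^esub> h) c"
proof -
  interpret group_action G "topspace M" \<phi>
    using assms(1) unfolding homeo_action_def by blast
  have "act_chain \<phi> g (act_chain \<phi> h c) = chain_map 1 (\<phi> g \<circ> \<phi> h) c"
    unfolding act_chain_def by (simp add: chain_map_compose)
  also have "\<dots> = act_chain \<phi> (g \<otimes>\<^bsub>G\<^esub> h) c"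
    unfolding act_chain_def
    by (rule chain_map_eq[OF assms(4)]) (simp add: composition_rule[OF _ assms(2,3)])
  finally show ?thesis .
qed

lemma act_chain_one:
  assumes "homeo_action G M \<phi>" and "singular_chain 1 M c"
  shows "act_chain \<phi> \<one>\<^bsub>G\<^esub> c = c"
proof -
  interpret group_action G "topspace M" \<phi>
    using assms(1) unfolding homeo_action_def by blast
  show ?thesis
    unfolding act_chain_def
    by (rule chain_map_id_gen[OF assms(2)]) (simp add: fun_cong[OF id_eq_one, symmetric])
qed

lemma act_chain_add: "act_chain \<phi> g (x + y) = act_chain \<phi> g x + act_chain \<phi> g y"
  by (simp add: act_chain_def chain_map_add)

lemma act_chain_cmul: "act_chain \<phi> g (frag_cmul k x) = frag_cmul k (act_chain \<phi> g x)"
  by (simp add: act_chain_def)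

lemma act_chain_sum: "finite I \<Longrightarrow> act_chain \<phi> g (sum f I) = (\<Sum>i\<in>I. act_chain \<phi> g (f i))"
  by (simp add: act_chain_def chain_map_sum o_def)

lemma singular_chain_act_chain:
  "homeo_action G M \<phi> \<Longrightarrow> g \<in> carrier G \<Longrightarrow> singular_chain 1 M c \<Longrightarrow> singular_chain 1 M (act_chain \<phi> g c)"
  unfolding act_chain_def using singular_chain_chain_map homeo_action_continuous_map by metis

lemma mod_boundary_act_chain:
  "homeo_action G M \<phi> \<Longrightarrow> g \<in> carrier G \<Longrightarrow> mod_boundary l M c \<Longrightarrow> mod_boundary l M (act_chain \<phi> g c)"
  unfolding act_chain_def using mod_boundary_chain_map homeo_action_continuous_map by metis

lemma mod_cycle_act_chain:
  "homeo_action G M \<phi> \<Longrightarrow> g \<in> carrier G \<Longrightarrow> mod_cycle l M c \<Longrightarrow> mod_cycle l M (act_chain \<phi> g c)"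
  unfolding act_chain_def using mod_cycle_chain_map homeo_action_continuous_map by metis

lemma finite_left_cosets: "finite (carrier G) \<Longrightarrow> finite (left_cosets G H)"
  by (simp add: left_cosets_def)

context group
begin

lemma left_cosets_subset_carrier: "subgroup H G \<Longrightarrow> C \<in> left_cosets G H \<Longrightarrow> C \<subseteq> carrier G"
  unfolding left_cosets_def using l_coset_subset_G subgroup.subset by blast

lemma l_coset_self: "subgroup H G \<Longrightarrow> x \<in> carrier G \<Longrightarrow> x \<in> x <# H"
  using l_coset_swap[of x x H] l_repr_independence subgroup.one_closed
  unfolding l_coset_def by fastforce

lemma left_cosets_eq_l_coset:
  assumes H: "subgroup H G" and "C \<in> left_cosets G H" and "y \<in> C"
  shows "C = y <# H"
proof -
  obtain x where "x \<in> carrier G" "C = x <# H"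
    using assms(2) unfolding left_cosets_def by blast
  then show ?thesis
    using l_repr_independence[OF _ _ H] assms(3) by blast
qed

lemma sum_l_coset:
  assumes "g \<in> carrier G" and "C \<subseteq> carrier G"
  shows "(\<Sum>y\<in>g <# C. f y) = (\<Sum>x\<in>C. f (g \<otimes> x))"
proof -
  have "g <# C = (\<lambda>x. g \<otimes> x) ` C"
    unfolding l_coset_def by auto
  moreover have "inj_on (\<lambda>x. g \<otimes> x) C"
    using inj_on_subset[OF inj_on_cmult[OF assms(1)] assms(2)] .
  ultimately show ?thesis
    by (simp add: sum.reindex)
qed

lemma sum_left_cosets:
  assumes H: "subgroup H G" and fin: "finite (carrier G)"
  shows "(\<Sum>C\<in>left_cosets G H. \<Sum>x\<in>C. F C x) = (\<Sum>x\<in>carrier G. F (x <# H) x)"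
proof -
  have fiber: "{x \<in> carrier G. x <# H = C} = C" if "C \<in> left_cosets G H" for C
    using left_cosets_subset_carrier[OF H that] left_cosets_eq_l_coset[OF H that]
      l_coset_self[OF H] by blast
  have "(\<Sum>C\<in>left_cosets G H. \<Sum>x\<in>C. F C x) =
        (\<Sum>C\<in>left_cosets G H. \<Sum>x\<in>{x \<in> carrier G. x <# H = C}. F (x <# H) x)"
  proof (rule sum.cong[OF refl])
    fix C assume C: "C \<in> left_cosets G H"
    show "(\<Sum>x\<in>C. F C x) = (\<Sum>x\<in>{x \<in> carrier G. x <# H = C}. F (x <# H) x)"
      unfolding fiber[OF C] using left_cosets_eq_l_coset[OF H C] by (intro sum.cong refl) simp
  qed
  also have "\<dots> = (\<Sum>x\<in>carrier G. F (x <# H) x)"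
    by (rule sum.group[OF fin finite_left_cosets[OF fin]]) (auto simp: left_cosets_def)
  finally show ?thesis .
qed

end

section \<open>The permutation module as a submodule\<close>

lemma dvd_sum_diff:
  fixes d :: "'r :: comm_ring_1"
  assumes "\<And>x. x \<in> A \<Longrightarrow> d dvd f x - g x"
  shows "d dvd sum f A - sum g A"
  using assms by (simp add: sum_subtractf[symmetric] dvd_sum)

definition wide_class ::
    "nat \<Rightarrow> ('g, 'b) monoid_scheme \<Rightarrow> 'a topology \<Rightarrow> ('g \<Rightarrow> 'a \<Rightarrow> 'a) \<Rightarrow> 'a chain \<Rightarrow> bool" where
  "wide_class l G M \<phi> \<omega> \<longleftrightarrow> mod_cycle l M \<omega> \<and>
     (\<forall>a :: 'g \<Rightarrow> int.
        mod_boundary l M (\<Sum>g\<in>carrier G. frag_cmul (a g) (act_chain \<phi> g \<omega>))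
        \<longrightarrow> (\<forall>g\<in>carrier G. int l dvd a g))"

lemma homologically_wide_iff: "homologically_wide l G M \<phi> \<longleftrightarrow> (\<exists>\<omega>. wide_class l G M \<phi> \<omega>)"
  by (simp add: homologically_wide_def wide_class_def)

lemma perm_submodule_if_wide_class:
  assumes G: "group G" and fin: "finite (carrier G)" and act: "homeo_action G M \<phi>"
    and H: "subgroup H G" and \<omega>: "wide_class l G M \<phi> \<omega>"
  shows "perm_submodule l G H M \<phi>"
proof -
  interpret group G by (fact G)
  have cyc: "mod_cycle l M \<omega>"
    and indep: "\<And>a. mod_boundary l M (\<Sum>g\<in>carrier G. frag_cmul (a g) (act_chain \<phi> g \<omega>)) \<Longrightarrow>
                  \<forall>g\<in>carrier G. int l dvd a g"
    using \<omega> unfolding wide_class_def by auto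
  define f where "f C = (\<Sum>x\<in>C. act_chain \<phi> x \<omega>)" for C
  have "mod_cycle l M (f C)" if "C \<in> left_cosets G H" for C
    using frag_submodule_sum[OF frag_submodule_mod_cycle, of C "\<lambda>x. act_chain \<phi> x \<omega>"]
      mod_cycle_act_chain[OF act _ cyc] left_cosets_subset_carrier[OF H that]
    unfolding f_def by blast
  moreover have "mod_homologous l M (act_chain \<phi> g (f C)) (f (g <#\<^bsub>G\<^esub> C))"
    if g: "g \<in> carrier G" and C: "C \<in> left_cosets G H" for g C
  proof -
    have CG: "C \<subseteq> carrier G"
      by (rule left_cosets_subset_carrier[OF H C])
    have "act_chain \<phi> g (f C) = (\<Sum>x\<in>C. act_chain \<phi> (g \<otimes>\<^bsub>G\<^esub> x) \<omega>)"
      unfolding f_def act_chain_sum[OF finite_subset[OF CG fin]]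
      using CG act_chain_mult[OF act g _ mod_cycle_imp_singular_chain[OF cyc]]
      by (intro sum.cong) auto
    also have "\<dots> = f (g <#\<^bsub>G\<^esub> C)"
      unfolding f_def by (rule sum_l_coset[OF g CG, symmetric])
    finally show ?thesis
      unfolding mod_homologous_def using frag_submodule_zero[OF frag_submodule_mod_boundary] by simp
  qed
  moreover have "int l dvd a C"
    if "mod_boundary l M (\<Sum>C\<in>left_cosets G H. frag_cmul (a C) (f C))" and C: "C \<in> left_cosets G H"
    for a C
  proof -
    have "(\<Sum>C\<in>left_cosets G H. frag_cmul (a C) (f C)) =
          (\<Sum>x\<in>carrier G. frag_cmul (a (x <#\<^bsub>G\<^esub> H)) (act_chain \<phi> x \<omega>))"
      unfolding f_def frag_cmul_sum by (rule sum_left_cosets[OF H fin])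
    then have "\<forall>x\<in>carrier G. int l dvd a (x <#\<^bsub>G\<^esub> H)"
      using indep[of "\<lambda>x. a (x <#\<^bsub>G\<^esub> H)"] that(1) by simp
    moreover obtain x where "x \<in> carrier G" "C = x <#\<^bsub>G\<^esub> H"
      using C unfolding left_cosets_def by blast
    ultimately show ?thesis
      by simp
  qed
  ultimately show ?thesis
    unfolding perm_submodule_def by blast
qed

section \<open>The permutation module as a quotient\<close>

text \<open>The value is determined only modulo l (see frag_coordinate_dvd), and is arbitrary when
  no such k exists.\<close>
definition frag_coordinate :: "('x \<Rightarrow>\<^sub>0 int) set \<Rightarrow> ('x \<Rightarrow>\<^sub>0 int) \<Rightarrow> ('x \<Rightarrow>\<^sub>0 int) \<Rightarrow> int" where
  "frag_coordinate W v z = (SOME k. z - frag_cmul k v \<in> W)"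

lemma frag_coordinate:
  "\<exists>k. z - frag_cmul k v \<in> W \<Longrightarrow> z - frag_cmul (frag_coordinate W v z) v \<in> W"
  unfolding frag_coordinate_def by (rule someI_ex)

lemma frag_coordinate_dvd:
  assumes W: "frag_submodule W" and "v \<notin> W" and lv: "frag_cmul (int l) v \<in> W" and l: "prime l"
    and z: "z - frag_cmul k v \<in> W"
  shows "int l dvd frag_coordinate W v z - k"
proof (rule ccontr)
  define c where "c = frag_coordinate W v z"
  assume "\<not> int l dvd c - k"
  then obtain u t where ut: "u * (c - k) + t * int l = 1"
    using prime_bezout[OF l] unfolding c_def by blast
  have "frag_cmul (c - k) v = (z - frag_cmul k v) - (z - frag_cmul c v)"
    by (simp add: frag_cmul_diff_distrib algebra_simps del: minus_frag_cmul)
  also have "\<dots> \<in> W"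
    using z frag_coordinate[of z v W] unfolding c_def by (blast intro: frag_submodule_diff[OF W])
  finally have "frag_cmul u (frag_cmul (c - k) v) + frag_cmul t (frag_cmul (int l) v) \<in> W"
    using lv by (blast intro: frag_submodule_add[OF W] frag_submodule_cmul[OF W])
  also have "frag_cmul u (frag_cmul (c - k) v) + frag_cmul t (frag_cmul (int l) v) = v"
    by (simp add: frag_cmul_distrib[symmetric] ut)
  finally show False
    using \<open>v \<notin> W\<close> by contradiction
qed

text \<open>W is the preimage in the integral 1-chains of the kernel of a linear functional on
  H_1(M;F_l) that takes \<omega> to 1 and every other translate g\<omega> to 0.\<close>
definition dual_kernel ::
    "nat \<Rightarrow> ('g, 'b) monoid_scheme \<Rightarrow> 'a topology \<Rightarrow> ('g \<Rightarrow> 'a \<Rightarrow> 'a) \<Rightarrow> 'a chain \<Rightarrow> 'a chain set \<Rightarrow> bool"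
  where
  "dual_kernel l G M \<phi> \<omega> W \<longleftrightarrow>
     frag_submodule W \<and> Collect (mod_boundary l M) \<subseteq> W \<and> \<omega> \<notin> W \<and>
     (\<forall>g\<in>carrier G - {\<one>\<^bsub>G\<^esub>}. act_chain \<phi> g \<omega> \<in> W) \<and>
     (\<forall>z. singular_chain 1 M z \<longrightarrow> (\<exists>k. z - frag_cmul k \<omega> \<in> W))"

lemma wide_class_not_in_span_of_others:
  assumes G: "group G" and fin: "finite (carrier G)" and act: "homeo_action G M \<phi>"
    and l: "prime l" and \<omega>: "wide_class l G M \<phi> \<omega>"
  shows "\<not> mod_boundary l M (\<omega> - (\<Sum>g\<in>carrier G - {\<one>\<^bsub>G\<^esub>}. frag_cmul (a g) (act_chain \<phi> g \<omega>)))"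
proof
  assume bdry: "mod_boundary l M (\<omega> - (\<Sum>g\<in>carrier G - {\<one>\<^bsub>G\<^esub>}. frag_cmul (a g) (act_chain \<phi> g \<omega>)))"
  have one: "\<one>\<^bsub>G\<^esub> \<in> carrier G"
    by (simp add: G group.is_monoid monoid.one_closed)
  have cyc: "mod_cycle l M \<omega>"
    using \<omega> by (simp add: wide_class_def)
  define a' where "a' g = (if g = \<one>\<^bsub>G\<^esub> then 1 else - a g)" for g
  have "\<omega> - (\<Sum>g\<in>carrier G - {\<one>\<^bsub>G\<^esub>}. frag_cmul (a g) (act_chain \<phi> g \<omega>)) =
        (\<Sum>g\<in>carrier G. frag_cmul (a' g) (act_chain \<phi> g \<omega>))"
    using act_chain_one[OF act mod_cycle_imp_singular_chain[OF cyc]]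
    by (simp add: a'_def sum.remove[OF fin one] sum_negf[symmetric])
  then have "int l dvd a' \<one>\<^bsub>G\<^esub>"
    using \<omega> bdry one unfolding wide_class_def by simp
  then show False
    using l by (simp add: a'_def)
qed

text \<open>Zorn's lemma is applied above the span of the boundaries and of the translates g\<omega>,
  g \<noteq> 1, which misses \<omega> by wideness.\<close>
lemma wide_class_dual_kernel:
  assumes G: "group G" and fin: "finite (carrier G)" and act: "homeo_action G M \<phi>"
    and l: "prime l" and \<omega>: "wide_class l G M \<phi> \<omega>"
  obtains W where "dual_kernel l G M \<phi> \<omega> W"
proof -
  define others where "others a = (\<Sum>g\<in>carrier G - {\<one>\<^bsub>G\<^esub>}. frag_cmul (a g) (act_chain \<phi> g \<omega>))"
    for a
  define B where "B = {c. \<exists>a. c - others a \<in> Collect (mod_boundary l M)}"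
  have bdry: "frag_submodule (Collect (mod_boundary l M))"
    by (rule frag_submodule_mod_boundary)
  have "frag_submodule B"
    unfolding B_def others_def by (rule frag_submodule_plus_span[OF bdry])
  moreover have "\<omega> \<notin> B"
    using wide_class_not_in_span_of_others[OF assms] unfolding B_def others_def by blast
  ultimately obtain W where "B \<subseteq> W" and W: "frag_submodule W" "\<omega> \<notin> W"
    and max: "\<And>W'. frag_submodule W' \<Longrightarrow> W \<subseteq> W' \<Longrightarrow> \<omega> \<notin> W' \<Longrightarrow> W' = W"
    by (rule frag_submodule_maximal_avoiding) blast
  have "others (\<lambda>_. 0) = 0"
    by (simp add: others_def)
  then have boundaries: "Collect (mod_boundary l M) \<subseteq> W"
    using \<open>B \<subseteq> W\<close> unfolding B_def by (metis (mono_tags, lifting) diff_zero mem_Collect_eq subset_iff)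
  have "act_chain \<phi> g \<omega> \<in> W" if "g \<in> carrier G - {\<one>\<^bsub>G\<^esub>}" for g
  proof -
    have "others (\<lambda>h. if h = g then 1 else 0) =
          (\<Sum>h\<in>carrier G - {\<one>\<^bsub>G\<^esub>}. if h = g then act_chain \<phi> g \<omega> else 0)"
      unfolding others_def by (intro sum.cong) auto
    also have "\<dots> = act_chain \<phi> g \<omega>"
      using that fin by simp
    finally have "mod_boundary l M (act_chain \<phi> g \<omega> - others (\<lambda>h. if h = g then 1 else 0))"
      using frag_submodule_zero[OF bdry] by simp
    then show ?thesis
      using \<open>B \<subseteq> W\<close> unfolding B_def by blast
  qed
  moreover have "\<exists>k. z - frag_cmul k \<omega> \<in> W" if "singular_chain 1 M z" for z
    using maximal_avoiding_span[OF W l max] mod_boundary_cmul_modulus[OF that] boundaries by blast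
  ultimately show thesis
    using that W boundaries unfolding dual_kernel_def by blast
qed

locale dual_kernel_setting = group G
  for G :: "('g, 'b) monoid_scheme" (structure) +
  fixes M :: "'a topology" and \<phi> :: "'g \<Rightarrow> 'a \<Rightarrow> 'a" and l :: nat
    and \<omega> :: "'a chain" and W :: "'a chain set"
  assumes finite_carrier: "finite (carrier G)"
    and homeo_action: "homeo_action G M \<phi>"
    and prime_l: "prime l"
    and mod_cycle_\<omega>: "mod_cycle l M \<omega>"
    and dual_kernel: "dual_kernel l G M \<phi> \<omega> W"
begin

lemma kernel_submodule: "frag_submodule W"
  and mod_boundary_in_kernel: "mod_boundary l M b \<Longrightarrow> b \<in> W"
  and \<omega>_not_in_kernel: "\<omega> \<notin> W"
  and act_chain_in_kernel: "g \<in> carrier G \<Longrightarrow> g \<noteq> \<one> \<Longrightarrow> act_chain \<phi> g \<omega> \<in> W"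
  and exists_coordinate: "singular_chain 1 M z \<Longrightarrow> \<exists>k. z - frag_cmul k \<omega> \<in> W"
  using dual_kernel unfolding dual_kernel_def by auto

abbreviation coord :: "'a chain \<Rightarrow> int" where
  "coord \<equiv> frag_coordinate W \<omega>"

lemma coord_dvd: "z - frag_cmul k \<omega> \<in> W \<Longrightarrow> int l dvd coord z - k"
  using frag_coordinate_dvd[OF kernel_submodule \<omega>_not_in_kernel _ prime_l]
    mod_boundary_in_kernel[OF mod_boundary_cmul_modulus[OF mod_cycle_imp_singular_chain[OF mod_cycle_\<omega>]]]
  by blast

lemma coord_spec: "singular_chain 1 M z \<Longrightarrow> z - frag_cmul (coord z) \<omega> \<in> W"
  by (rule frag_coordinate[OF exists_coordinate])

lemma coord_act_chain_sum:
  assumes y: "y \<in> carrier G"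
  shows "int l dvd coord (act_chain \<phi> (inv y) (\<Sum>g\<in>carrier G. frag_cmul (a g) (act_chain \<phi> g \<omega>))) - a y"
proof (rule coord_dvd)
  have \<omega>: "singular_chain 1 M \<omega>"
    by (rule mod_cycle_imp_singular_chain[OF mod_cycle_\<omega>])
  define d where "d g = frag_cmul (a g) (act_chain \<phi> (inv y \<otimes> g) \<omega>) -
                          (if g = y then frag_cmul (a y) \<omega> else 0)" for g
  have "act_chain \<phi> (inv y) (\<Sum>g\<in>carrier G. frag_cmul (a g) (act_chain \<phi> g \<omega>)) - frag_cmul (a y) \<omega> =
        sum d (carrier G)"
    using y act_chain_mult[OF homeo_action inv_closed[OF y] _ \<omega>]
    by (simp add: d_def act_chain_sum[OF finite_carrier] act_chain_cmul sum_subtractf finite_carrier)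
  also have "\<dots> \<in> W"
  proof (rule frag_submodule_sum[OF kernel_submodule])
    fix g assume g: "g \<in> carrier G"
    show "d g \<in> W"
    proof (cases "g = y")
      case True
      then show ?thesis
        using y act_chain_one[OF homeo_action \<omega>] frag_submodule_zero[OF kernel_submodule]
        by (simp add: d_def)
    next
      case False
      then have "inv y \<otimes> g \<noteq> \<one>"
        using inv_solve_left'[OF one_closed y g] y by simp
      then show ?thesis
        using False y g act_chain_in_kernel frag_submodule_cmul[OF kernel_submodule]
        by (simp add: d_def)
    qed
  qed
  finally show "act_chain \<phi> (inv y) (\<Sum>g\<in>carrier G. frag_cmul (a g) (act_chain \<phi> g \<omega>)) -
                frag_cmul (a y) \<omega> \<in> W" .
qed

text \<open>coset_coordinate z C is the coefficient of C in the image of z under the map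
  z \<mapsto> \<Sum>_x \<lambda>(x^-1 z) x onto F_l[G] (with \<lambda> = coord), followed by the projection
  F_l[G] \<rightarrow> F_l[G/H].\<close>
definition coset_coordinate :: "'a chain \<Rightarrow> 'g set \<Rightarrow> int" where
  "coset_coordinate z C = (\<Sum>x\<in>C. coord (act_chain \<phi> (inv x) z))"

lemma coset_coordinate_add:
  assumes z: "singular_chain 1 M z" and w: "singular_chain 1 M w" and C: "C \<subseteq> carrier G"
  shows "int l dvd coset_coordinate (z + w) C - (coset_coordinate z C + coset_coordinate w C)"
  unfolding coset_coordinate_def sum.distrib[symmetric]
proof (rule dvd_sum_diff, rule coord_dvd)
  fix x assume "x \<in> C"
  then have x: "inv x \<in> carrier G"
    using C by blast
  define zx where "zx = act_chain \<phi> (inv x) z"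
  define wx where "wx = act_chain \<phi> (inv x) w"
  have "act_chain \<phi> (inv x) (z + w) - frag_cmul (coord zx + coord wx) \<omega> =
        (zx - frag_cmul (coord zx) \<omega>) + (wx - frag_cmul (coord wx) \<omega>)"
    by (simp add: zx_def wx_def act_chain_add frag_cmul_distrib algebra_simps)
  also have "\<dots> \<in> W"
    using singular_chain_act_chain[OF homeo_action x] z w coord_spec
      frag_submodule_add[OF kernel_submodule] unfolding zx_def wx_def by blast
  finally show "act_chain \<phi> (inv x) (z + w) - frag_cmul (coord zx + coord wx) \<omega> \<in> W" .
qed

lemma coset_coordinate_mod_boundary:
  assumes "mod_boundary l M b" and C: "C \<subseteq> carrier G"
  shows "int l dvd coset_coordinate b C"
  unfolding coset_coordinate_def
proof (rule dvd_sum)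
  fix x assume "x \<in> C"
  then have "mod_boundary l M (act_chain \<phi> (inv x) b)"
    using C mod_boundary_act_chain[OF homeo_action _ assms(1)] by blast
  then show "int l dvd coord (act_chain \<phi> (inv x) b)"
    using coord_dvd[of _ 0] mod_boundary_in_kernel by simp
qed

lemma coset_coordinate_act_chain:
  assumes g: "g \<in> carrier G" and C: "C \<subseteq> carrier G" and z: "singular_chain 1 M z"
  shows "coset_coordinate (act_chain \<phi> g z) (g <# C) = coset_coordinate z C"
  unfolding coset_coordinate_def sum_l_coset[OF g C]
proof (rule sum.cong[OF refl])
  fix x assume "x \<in> C"
  then have x: "x \<in> carrier G"
    using C by blast
  have "inv (g \<otimes> x) \<otimes> g = inv x"
    using g x by (simp add: inv_mult_group m_assoc)
  then show "coord (act_chain \<phi> (inv (g \<otimes> x)) (act_chain \<phi> g z)) = coord (act_chain \<phi> (inv x) z)"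
    using act_chain_mult[OF homeo_action _ g z] g x by simp
qed

lemma coset_coordinate_surj:
  assumes H: "subgroup H G"
  shows "\<exists>z. mod_cycle l M z \<and> (\<forall>C\<in>left_cosets G H. int l dvd coset_coordinate z C - x C)"
proof -
  define rep where "rep C = (SOME y. y \<in> C)" for C :: "'g set"
  define a where "a y = (if y = rep (y <# H) then x (y <# H) else 0)" for y
  define z where "z = (\<Sum>g\<in>carrier G. frag_cmul (a g) (act_chain \<phi> g \<omega>))"
  have "mod_cycle l M z"
    unfolding z_def using frag_submodule_mod_cycle
    by (auto intro!: frag_submodule_sum[where W = "Collect (mod_cycle l M)", simplified]
        frag_submodule_cmul[where W = "Collect (mod_cycle l M)", simplified]
        mod_cycle_act_chain[OF homeo_action _ mod_cycle_\<omega>])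
  moreover have "int l dvd coset_coordinate z C - x C" if C: "C \<in> left_cosets G H" for C
  proof -
    have CG: "C \<subseteq> carrier G"
      by (rule left_cosets_subset_carrier[OF H C])
    obtain g where "g \<in> carrier G" "C = g <# H"
      using C unfolding left_cosets_def by blast
    then have "g \<in> C"
      using l_coset_self[OF H] by blast
    then have "rep C \<in> C"
      unfolding rep_def by (rule someI)
    moreover have "a y = (if y = rep C then x C else 0)" if "y \<in> C" for y
      using left_cosets_eq_l_coset[OF H C that] by (simp add: a_def)
    ultimately have "(\<Sum>y\<in>C. a y) = x C"
      using finite_subset[OF CG finite_carrier] by simp
    moreover have "int l dvd coset_coordinate z C - (\<Sum>y\<in>C. a y)"
      unfolding coset_coordinate_def z_def
      using CG coord_act_chain_sum by (intro dvd_sum_diff) blast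
    ultimately show ?thesis
      by simp
  qed
  ultimately show ?thesis
    by blast
qed

lemma perm_quotient_of_dual_kernel:
  assumes H: "subgroup H G"
  shows "perm_quotient l G H M \<phi>"
  unfolding perm_quotient_def
proof (intro exI[of _ coset_coordinate] conjI allI impI ballI)
  fix C assume C: "C \<in> left_cosets G H"
  then have CG: "C \<subseteq> carrier G"
    by (rule left_cosets_subset_carrier[OF H])
  show "int l dvd coset_coordinate (z + w) C - (coset_coordinate z C + coset_coordinate w C)"
    if "mod_cycle l M z" "mod_cycle l M w" for z w
    using coset_coordinate_add[OF that[THEN mod_cycle_imp_singular_chain] CG] .
  show "int l dvd coset_coordinate b C" if "mod_boundary l M b" for b
    using coset_coordinate_mod_boundary[OF that CG] .
  show "int l dvd coset_coordinate (act_chain \<phi> g z) (g <# C) - coset_coordinate z C"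
    if "g \<in> carrier G" "mod_cycle l M z" for g z
    using coset_coordinate_act_chain[OF that(1) CG mod_cycle_imp_singular_chain[OF that(2)]] by simp
next
  show "\<exists>z. mod_cycle l M z \<and> (\<forall>C\<in>left_cosets G H. int l dvd coset_coordinate z C - x C)" for x
    by (rule coset_coordinate_surj[OF H])
qed

end

theorem lemma7p2:
  fixes G :: "('g, 'b) monoid_scheme"
    and M :: "'a topology"
    and \<phi> :: "'g \<Rightarrow> 'a \<Rightarrow> 'a"
    and l :: nat
  assumes "group G" and "finite (carrier G)"
    and "closed_connected_manifold M"
    and "homeo_action G M \<phi>"
    and "prime l"
    and "homologically_wide l G M \<phi>"
  shows "\<forall>H1. subgroup H1 G \<longrightarrow>
           perm_submodule l G H1 M \<phi> \<and>
           (\<not> l dvd card (carrier G) \<longrightarrow> perm_quotient l G H1 M \<phi>)"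
proof (intro allI impI conjI)
  fix H1 assume H1: "subgroup H1 G"
  obtain \<omega> where \<omega>: "wide_class l G M \<phi> \<omega>"
    using assms(6) homologically_wide_iff by blast
  show "perm_submodule l G H1 M \<phi>"
    by (rule perm_submodule_if_wide_class[OF assms(1,2,4) H1 \<omega>])
  obtain W where "dual_kernel l G M \<phi> \<omega> W"
    using wide_class_dual_kernel[OF assms(1,2,4,5) \<omega>] .
  then have "dual_kernel_setting G M \<phi> l \<omega> W"
    using assms(1,2,4,5) \<omega>
    by (simp add: dual_kernel_setting_def dual_kernel_setting_axioms_def wide_class_def)
  then show "perm_quotient l G H1 M \<phi>"
    using dual_kernel_setting.perm_quotient_of_dual_kernel[OF _ H1] by blast
qed

end
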